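(* Let $\mathcal{E}$ be an elliptic curve over $\mathbb{F}_q$ given by a smooth Weierstrass cubic $E(x,y,z)=0$ in $\mathbb{P}^2$, let $n'\ge1$, $l\ge1$, and let $R_1,\dots,R_{3n'+l}$ be distinct points of $\mathcal{E}(\mathbb{F}_q)$ with $(3n'+l)\times D$ evaluation matrix $\mathcal{M}$ and left kernel $\mathcal{K}$. (i) If there is a homogeneous polynomial $F$ of degree $n'$, not divisible by $E$, whose zero set contains $3n'$ of the points $R_1,\dots,R_{3n'+l}$, then $\mathcal{K}$ contains a nonzero vector $v$ having at least $l$ zero entries (namely zero in the positions of the remaining $l$ points). (ii) Conversely, if $\mathcal{K}$ contains a nonzero vector $v$ with at least $l$ zero entries, then for any set $S$ of $3n'$ indices containing all indices $r$ with $v_r\neq0$, there is a homogeneous polynomial of degree $n'$, not divisible by $E$, vanishing at all points $R_r$, $r\in S$.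
   Context: Notation: fix $n'\ge1$, let $D=\binom{n'+2}{2}$, and fix an ordering of the $D$ monomials $x^iy^jz^k$ with $i+j+k=n'$. For a point $R=(x_0:y_0:z_0)\in\mathbb{P}^2(\mathbb{F}_q)$ with a fixed choice of homogeneous coordinates, let $\overline{R}\in\mathbb{F}_q^D$ be the row vector of values $x_0^iy_0^jz_0^k$ in this ordering. The evaluation matrix of points $R_1,\dots,R_N$ is the $N\times D$ matrix $\mathcal{M}$ whose $r$-th row is $\overline{R_r}$; its left kernel is $\mathcal{K}=\{v\in\mathbb{F}_q^N: v\mathcal{M}=0\}$. *)

theory Defs
  imports Main
begin

text \<open>Homogeneous polynomials in x, y, z over a field are represented by their
coefficient functions on exponent triples (i,j,k), meaning the monomial x^i y^j z^k.\<close>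

type_synonym 'a tpoly = "nat \<times> nat \<times> nat \<Rightarrow> 'a"

definition monomials :: "nat \<Rightarrow> (nat \<times> nat \<times> nat) set" where
  "monomials d = {(i,j,k). i + j + k = d}"

definition mono_eval :: "nat \<times> nat \<times> nat \<Rightarrow> 'a \<times> 'a \<times> 'a \<Rightarrow> 'a::comm_ring_1" where
  "mono_eval m p = (case m of (i,j,k) \<Rightarrow> case p of (x,y,z) \<Rightarrow> x^i * y^j * z^k)"

definition poly_finite :: "'a::zero tpoly \<Rightarrow> bool" where
  "poly_finite F \<longleftrightarrow> finite {m. F m \<noteq> 0}"

definition homog :: "nat \<Rightarrow> 'a::zero tpoly \<Rightarrow> bool" where
  "homog d F \<longleftrightarrow> (\<forall>m. F m \<noteq> 0 \<longrightarrow> m \<in> monomials d)"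

definition peval :: "'a::comm_ring_1 tpoly \<Rightarrow> 'a \<times> 'a \<times> 'a \<Rightarrow> 'a" where
  "peval F p = (\<Sum>m\<in>{m. F m \<noteq> 0}. F m * mono_eval m p)"

definition pmult :: "'a::comm_ring_1 tpoly \<Rightarrow> 'a tpoly \<Rightarrow> 'a tpoly" where
  "pmult F G m = (case m of (i,j,k) \<Rightarrow>
     (\<Sum>a\<in>{0..i}. \<Sum>b\<in>{0..j}. \<Sum>c\<in>{0..k}. F (a,b,c) * G (i-a, j-b, k-c)))"

definition pdvd :: "'a::comm_ring_1 tpoly \<Rightarrow> 'a tpoly \<Rightarrow> bool" where
  "pdvd E F \<longleftrightarrow> (\<exists>G. poly_finite G \<and> F = pmult E G)"

definition weier :: "'a \<Rightarrow> 'a \<Rightarrow> 'a \<Rightarrow> 'a \<Rightarrow> 'a \<Rightarrow> 'a::comm_ring_1 tpoly" where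
  "weier a1 a2 a3 a4 a6 m =
     (if m = (0,2,1) then 1
      else if m = (1,1,1) then a1
      else if m = (0,1,2) then a3
      else if m = (3,0,0) then -1
      else if m = (2,0,1) then -a2
      else if m = (1,0,2) then -a4
      else if m = (0,0,3) then -a6
      else 0)"

text \<open>Discriminant of the Weierstrass equation; the cubic is smooth iff it is nonzero.\<close>
definition weier_disc :: "'a \<Rightarrow> 'a \<Rightarrow> 'a \<Rightarrow> 'a \<Rightarrow> 'a \<Rightarrow> 'a::comm_ring_1" where
  "weier_disc a1 a2 a3 a4 a6 =
    (let b2 = a1^2 + 4*a2; b4 = 2*a4 + a1*a3; b6 = a3^2 + 4*a6;
         b8 = a1^2*a6 + 4*a2*a6 - a1*a3*a4 + a2*a3^2 - a4^2
     in - (b2^2*b8) - 8*b4^3 - 27*b6^2 + 9*b2*b4*b6)"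

definition proj_point :: "'a::zero \<times> 'a \<times> 'a \<Rightarrow> bool" where
  "proj_point p \<longleftrightarrow> p \<noteq> (0,0,0)"

definition proj_eq :: "'a::field \<times> 'a \<times> 'a \<Rightarrow> 'a \<times> 'a \<times> 'a \<Rightarrow> bool" where
  "proj_eq p q \<longleftrightarrow> (\<exists>c. c \<noteq> 0 \<and> q = (case p of (x,y,z) \<Rightarrow> (c*x, c*y, c*z)))"

text \<open>Left kernel of the N x D evaluation matrix of degree d monomials at R 0, ..., R (N-1):
  v M = 0, i.e. for every monomial column the weighted sum of its entries vanishes.\<close>
definition in_left_kernel :: "nat \<Rightarrow> nat \<Rightarrow> (nat \<Rightarrow> 'a \<times> 'a \<times> 'a) \<Rightarrow> (nat \<Rightarrow> 'a::comm_ring_1) \<Rightarrow> bool" where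
  "in_left_kernel d N R v \<longleftrightarrow> (\<forall>m\<in>monomials d. (\<Sum>r<N. v r * mono_eval m (R r)) = 0)"

end

theory Submission
  imports Defs "HOL-Library.FuncSet" "HOL-Library.Cardinality" "HOL-Library.Product_Plus"
begin

text \<open>Over the finite field F_q dimensions can be compared by counting. For a set S of 3n points,
  row rank = column rank of the evaluation matrix says that the forms of degree n vanishing on S
  number |K| q^c, where K is the left kernel and c the number of monomials of degree n - 3, because
  there are exactly 3n more monomials of degree n than of degree n - 3.

  (i) If F vanishes on S but is not a multiple of E, then the q q^c forms a F + E G, with G of
  degree n - 3, are pairwise distinct (multiplication by E is injective) and all vanish on S, since
  E vanishes at the points. Hence |K| \<ge> q and K contains a nonzero vector.

  (ii) Conversely, a nonzero kernel vector gives |K| \<ge> 2, so more than q^c forms of degree n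
  vanish on S; as there are at most q^c multiples E G of degree n, one of them is not a multiple
  of E.\<close>

definition supported_on :: "'i set \<Rightarrow> ('i \<Rightarrow> 'a::zero) set" where
  "supported_on A = {f. \<forall>x. f x \<noteq> 0 \<longrightarrow> x \<in> A}"

lemma supported_on_eq_image_PiE:
  fixes A :: "'i set"
  shows "supported_on A = (\<lambda>f x. if x \<in> A then f x else 0) ` (A \<rightarrow>\<^sub>E UNIV)"
proof (intro equalityI subsetI)
  fix f :: "'i \<Rightarrow> 'a::zero" assume "f \<in> supported_on A"
  then have "f = (\<lambda>x. if x \<in> A then restrict f A x else 0)"
    by (auto simp: supported_on_def fun_eq_iff)
  then show "f \<in> (\<lambda>f x. if x \<in> A then f x else 0) ` (A \<rightarrow>\<^sub>E UNIV)"
    by (intro image_eqI[where x = "restrict f A"]) simp_all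
qed (auto simp: supported_on_def)

lemma lincomb_in_supported_on:
  fixes f g :: "'i \<Rightarrow> 'a::comm_ring_1"
  assumes "f \<in> supported_on A" and "g \<in> supported_on A"
  shows "(\<lambda>x. a * f x + b * g x) \<in> supported_on A"
  using assms unfolding supported_on_def mem_Collect_eq by (metis add.right_neutral mult_zero_right)

lemma finite_supported_on [simp, intro]:
  "finite A \<Longrightarrow> finite (supported_on A :: ('i \<Rightarrow> 'a::{zero,finite}) set)"
  by (simp add: supported_on_eq_image_PiE finite_PiE)

lemma card_supported_on:
  assumes "finite A"
  shows "card (supported_on A :: ('i \<Rightarrow> 'a::{zero,finite}) set) = CARD('a) ^ card A"
proof -
  have "inj_on (\<lambda>f x. if x \<in> A then f x else (0::'a)) (A \<rightarrow>\<^sub>E UNIV)"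
  proof (rule inj_onI, rule ext)
    fix f g :: "'i \<Rightarrow> 'a" and x
    assume f: "f \<in> A \<rightarrow>\<^sub>E UNIV" and g: "g \<in> A \<rightarrow>\<^sub>E UNIV"
      and eq: "(\<lambda>x. if x \<in> A then f x else 0) = (\<lambda>x. if x \<in> A then g x else 0)"
    show "f x = g x"
    proof (cases "x \<in> A")
      case True
      then show ?thesis using fun_cong[OF eq, of x] by simp
    next
      case False
      then show ?thesis using PiE_arb[OF f False] PiE_arb[OF g False] by simp
    qed
  qed
  then show ?thesis
    by (simp add: supported_on_eq_image_PiE card_image card_funcsetE assms)
qed

lemma card_hyperplane:
  fixes w :: "'i \<Rightarrow> 'a::{field,finite}"
  assumes S: "finite S" and r0: "r0 \<in> S" "w r0 \<noteq> 0"
  shows "card {v \<in> supported_on S. (\<Sum>r\<in>S. v r * w r) = 0} * CARD('a) = CARD('a) ^ card S"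
proof -
  define \<phi> where "\<phi> v = (\<Sum>r\<in>S. v r * w r)" for v
  define e where "e r = (if r = r0 then 1 / w r0 else 0)" for r
  define Z where "Z = {v \<in> supported_on S. \<phi> v = 0}"
  have "(\<Sum>r\<in>S. e r * w r) = (\<Sum>r\<in>S. if r = r0 then 1 else 0)"
    by (rule sum.cong) (auto simp: e_def r0)
  also have "\<dots> = 1" using S r0 by simp
  finally have \<phi>_shift: "\<phi> (\<lambda>r. v r + t * e r) = \<phi> v + t" for v t
    by (simp add: \<phi>_def distrib_right sum.distrib mult.assoc flip: sum_distrib_left)
  have shift_supported: "(\<lambda>r. v r + t * e r) \<in> supported_on S" if "v \<in> supported_on S" for v t
    using that r0 by (auto simp: supported_on_def e_def)
  have "bij_betw (\<lambda>(v, t) r. v r + t * e r) (Z \<times> UNIV) (supported_on S)"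
  proof (rule bij_betw_byWitness[where f' = "\<lambda>u. (\<lambda>r. u r + (- \<phi> u) * e r, \<phi> u)"])
    show "\<forall>x\<in>Z \<times> UNIV. (\<lambda>u. (\<lambda>r. u r + (- \<phi> u) * e r, \<phi> u)) ((\<lambda>(v, t) r. v r + t * e r) x) = x"
      by (auto simp: Z_def \<phi>_shift)
    show "\<forall>u\<in>supported_on S. (\<lambda>(v, t) r. v r + t * e r) (\<lambda>r. u r + (- \<phi> u) * e r, \<phi> u) = u"
      by auto
    show "(\<lambda>(v, t) r. v r + t * e r) ` (Z \<times> UNIV) \<subseteq> supported_on S"
      by (auto simp: Z_def shift_supported)
    show "(\<lambda>u. (\<lambda>r. u r + (- \<phi> u) * e r, \<phi> u)) ` supported_on S \<subseteq> Z \<times> UNIV"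
      unfolding Z_def by (auto simp del: mult_minus_left simp: shift_supported \<phi>_shift)
  qed
  then have "card (supported_on S :: ('i \<Rightarrow> 'a) set) = card (Z \<times> (UNIV :: 'a set))"
    by (rule bij_betw_same_card[symmetric])
  then show ?thesis
    using card_supported_on[OF S, where 'a='a] by (simp add: card_cartesian_product Z_def \<phi>_def)
qed

lemma exists_ne_if_two_le_card:
  assumes "2 \<le> card A"
  shows "\<exists>x\<in>A. x \<noteq> a"
proof (rule ccontr)
  assume "\<not> (\<exists>x\<in>A. x \<noteq> a)"
  then have "card A \<le> card {a}" by (intro card_mono) auto
  with assms show False by simp
qed

lemma one_le_CARD: "1 \<le> CARD('a::finite)"
  by (simp add: Suc_le_eq)

lemma two_le_CARD_field: "2 \<le> CARD('a::{field,finite})"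
proof -
  have "card {0::'a, 1} \<le> CARD('a)" by (rule card_mono) simp_all
  then show ?thesis by simp
qed

text \<open>Count by the fibres over c: the fibre is all of supported_on S when c is in the kernel, and a
  hyperplane otherwise.\<close>
lemma card_orthogonal_pairs:
  fixes b :: "'j \<Rightarrow> 'i \<Rightarrow> 'a::{field,finite}"
  assumes S: "finite S" and M: "finite M"
  shows "CARD('a) * card {(v, c). v \<in> supported_on S \<and> c \<in> supported_on M \<and>
                                   (\<Sum>r\<in>S. v r * (\<Sum>m\<in>M. c m * b m r)) = 0}
       = (CARD('a) - 1) * card {c \<in> supported_on M. \<forall>r\<in>S. (\<Sum>m\<in>M. c m * b m r) = 0}
           * CARD('a) ^ card S + CARD('a) ^ (card M + card S)"
  (is "?q * card ?P = (?q - 1) * card ?K * ?q ^ card S + _")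
proof -
  define Z where "Z c = {v \<in> supported_on S. (\<Sum>r\<in>S. v r * (\<Sum>m\<in>M. c m * b m r)) = 0}" for c
  have fibre: "?q * card (Z c) = ?q ^ card S + (if c \<in> ?K then (?q - 1) * ?q ^ card S else 0)"
    if c: "c \<in> supported_on M" for c
  proof (cases "c \<in> ?K")
    case True
    then have "Z c = supported_on S" by (auto simp: Z_def supported_on_def)
    then show ?thesis
      using True card_supported_on[OF S] one_le_CARD[where 'a='a] by (simp add: algebra_simps)
  next
    case False
    then obtain r0 where "r0 \<in> S" "(\<Sum>m\<in>M. c m * b m r0) \<noteq> 0" using c by auto
    then have "card (Z c) * ?q = ?q ^ card S" unfolding Z_def by (rule card_hyperplane[OF S])
    with False show ?thesis by (simp only: if_False mult.commute add_0_right)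
  qed
  have "?P = (\<lambda>(c, v). (v, c)) ` (SIGMA c:supported_on M. Z c)"
    by (auto simp: Z_def)
  then have "card ?P = card (SIGMA c:supported_on M. Z c)"
    by (simp add: card_image inj_on_def)
  also have "\<dots> = (\<Sum>c\<in>supported_on M. card (Z c))"
    by (rule card_SigmaI) (simp_all add: M S Z_def)
  finally have "card ?P = (\<Sum>c\<in>supported_on M. card (Z c))" .
  then have "?q * card ?P = (\<Sum>c\<in>supported_on M. ?q * card (Z c))"
    by (simp add: sum_distrib_left)
  also have "\<dots> = (\<Sum>c\<in>supported_on M. ?q ^ card S + (if c \<in> ?K then (?q - 1) * ?q ^ card S else 0))"
    using fibre by (rule sum.cong[OF refl])
  also have "\<dots> = (\<Sum>c\<in>(supported_on M :: ('j \<Rightarrow> 'a) set). ?q ^ card S)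
                   + (\<Sum>c\<in>supported_on M \<inter> ?K. (?q - 1) * ?q ^ card S)"
    by (subst sum.inter_restrict) (simp_all add: M sum.distrib)
  also have "supported_on M \<inter> ?K = ?K" by blast
  finally show ?thesis using card_supported_on[OF M, where 'a='a] by (simp add: power_add)
qed

text \<open>Row rank equals column rank, in the counting form |ker B| q^|S| = |ker B^T| q^|M|.\<close>
lemma card_kernel_transpose:
  fixes a :: "'i \<Rightarrow> 'j \<Rightarrow> 'a::{field,finite}"
  assumes S: "finite S" and M: "finite M"
  shows "card {c \<in> supported_on M. \<forall>r\<in>S. (\<Sum>m\<in>M. c m * a r m) = 0} * CARD('a) ^ card S
       = card {v \<in> supported_on S. \<forall>m\<in>M. (\<Sum>r\<in>S. v r * a r m) = 0} * CARD('a) ^ card M"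
    (is "card ?K1 * _ = card ?K2 * _")
proof -
  let ?q = "CARD('a)"
  define P1 where "P1 = {(v, c). v \<in> supported_on S \<and> c \<in> supported_on M \<and>
                                (\<Sum>r\<in>S. v r * (\<Sum>m\<in>M. c m * a r m)) = (0::'a)}"
  define P2 where "P2 = {(c, v). c \<in> supported_on M \<and> v \<in> supported_on S \<and>
                                (\<Sum>m\<in>M. c m * (\<Sum>r\<in>S. v r * a r m)) = (0::'a)}"
  have "(\<Sum>r\<in>S. v r * (\<Sum>m\<in>M. c m * a r m)) = (\<Sum>m\<in>M. c m * (\<Sum>r\<in>S. v r * a r m))" for v c
    unfolding sum_distrib_left by (subst sum.swap) (simp add: ac_simps)
  then have "P2 = (\<lambda>(v, c). (c, v)) ` P1"
    unfolding P1_def P2_def by auto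
  then have "card P2 = card P1"
    by (simp add: card_image swap_inj_on)
  moreover have "?q * card P1 = (?q - 1) * card ?K1 * ?q ^ card S + ?q ^ (card M + card S)"
    unfolding P1_def by (rule card_orthogonal_pairs[OF S M])
  moreover have "?q * card P2 = (?q - 1) * card ?K2 * ?q ^ card M + ?q ^ (card S + card M)"
    unfolding P2_def by (rule card_orthogonal_pairs[OF M S])
  ultimately have "(?q - 1) * (card ?K1 * ?q ^ card S) = (?q - 1) * (card ?K2 * ?q ^ card M)"
    by (simp add: add.commute mult.assoc)
  then show ?thesis using two_le_CARD_field[where 'a='a] by simp
qed

definition mdeg :: "nat \<times> nat \<times> nat \<Rightarrow> nat" where
  "mdeg m = fst m + fst (snd m) + snd (snd m)"

lemma mdeg_add [simp]: "mdeg (e + g) = mdeg e + mdeg g"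
  by (simp add: mdeg_def)

lemma mem_monomials_iff: "m \<in> monomials d \<longleftrightarrow> mdeg m = d"
  by (cases m) (auto simp: monomials_def mdeg_def)

lemma finite_monomials [simp]: "finite (monomials d)"
  by (rule finite_subset[of _ "{..d} \<times> {..d} \<times> {..d}"]) (auto simp: monomials_def)

lemma homogD: "homog d F \<Longrightarrow> F m \<noteq> 0 \<Longrightarrow> m \<in> monomials d"
  unfolding homog_def by blast

lemma homog_iff_supported_on: "homog d F \<longleftrightarrow> F \<in> supported_on (monomials d)"
  by (simp add: homog_def supported_on_def)

lemma poly_finite_if_supported_on: "finite A \<Longrightarrow> F \<in> supported_on A \<Longrightarrow> poly_finite F"
  unfolding poly_finite_def supported_on_def by (rule finite_subset[of _ A]) auto

lemma homog_imp_poly_finite: "homog d F \<Longrightarrow> poly_finite F"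
  unfolding poly_finite_def homog_def by (rule finite_subset[OF _ finite_monomials]) blast

lemma mono_eval_add: "mono_eval (e + g) p = mono_eval e p * mono_eval g p"
  by (cases e; cases g; cases p) (simp add: mono_eval_def power_add ac_simps)

lemma finite_add_decompositions: "finite {p. fst p + snd p = (m :: nat \<times> nat \<times> nat)}"
proof (rule finite_subset)
  let ?X = "{..fst m} \<times> {..fst (snd m)} \<times> {..snd (snd m)}"
  show "{p. fst p + snd p = m} \<subseteq> ?X \<times> ?X" by auto
qed simp

lemma pmult_eq_sum: "pmult F G m = (\<Sum>p\<in>{p. fst p + snd p = m}. F (fst p) * G (snd p))"
proof -
  obtain i j k where m: "m = (i, j, k)" by (cases m)
  have bij: "bij_betw (\<lambda>e. (e, m - e)) ({0..i} \<times> {0..j} \<times> {0..k}) {p. fst p + snd p = m}"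
    by (rule bij_betw_byWitness[where f' = fst]) (auto simp: m)
  have "pmult F G m = (\<Sum>e\<in>{0..i} \<times> {0..j} \<times> {0..k}. F e * G (m - e))"
    by (simp add: pmult_def m sum.cartesian_product split_def minus_prod_def)
  also have "\<dots> = (\<Sum>p\<in>{p. fst p + snd p = m}. F (fst p) * G (snd p))"
    by (rule sum.reindex_bij_betw[OF bij, of "\<lambda>p. F (fst p) * G (snd p)", simplified])
  finally show ?thesis .
qed

lemma peval_eq_sum:
  assumes "finite A" and "\<And>m. F m \<noteq> 0 \<Longrightarrow> m \<in> A"
  shows "peval F p = (\<Sum>m\<in>A. F m * mono_eval m p)"
  unfolding peval_def by (rule sum.mono_neutral_left) (use assms in auto)

lemma peval_lincomb:
  assumes "poly_finite F" and "poly_finite G"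
  shows "peval (\<lambda>m. c * F m + G m) p = c * peval F p + peval G p"
proof -
  let ?A = "{m. F m \<noteq> 0} \<union> {m. G m \<noteq> 0}"
  have A: "finite ?A" using assms by (simp add: poly_finite_def)
  have eq: "peval H p = (\<Sum>m\<in>?A. H m * mono_eval m p)" if "\<And>m. H m \<noteq> 0 \<Longrightarrow> m \<in> ?A" for H
    using A that by (rule peval_eq_sum)
  have "peval (\<lambda>m. c * F m + G m) p = (\<Sum>m\<in>?A. (c * F m + G m) * mono_eval m p)"
    by (rule eq) auto
  also have "\<dots> = c * (\<Sum>m\<in>?A. F m * mono_eval m p) + (\<Sum>m\<in>?A. G m * mono_eval m p)"
    by (simp add: sum.distrib sum_distrib_left algebra_simps)
  also have "\<dots> = c * peval F p + peval G p"
    using eq[of F] eq[of G] by auto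
  finally show ?thesis .
qed

lemma pmult_lincomb: "pmult F (\<lambda>g. c * G g + d * H g) m = c * pmult F G m + d * pmult F H m"
  unfolding pmult_eq_sum by (simp add: sum.distrib sum_distrib_left algebra_simps)

lemma pmult_nonzero_imp:
  assumes "pmult E G m \<noteq> 0"
  obtains e g where "e + g = m" "E e \<noteq> 0" "G g \<noteq> 0"
proof -
  obtain p where "fst p + snd p = m" "E (fst p) * G (snd p) \<noteq> 0"
    using assms unfolding pmult_eq_sum by (rule sum.not_neutral_contains_not_neutral) blast
  then show thesis using that[of "fst p" "snd p"] by (auto dest: mult_not_zero)
qed

lemma peval_pmult:
  assumes "poly_finite F" and "poly_finite G"
  shows "peval (pmult F G) p = peval F p * peval G p"
proof -
  define A where "A = {m. F m \<noteq> 0}"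
  define B where "B = {m. G m \<noteq> 0}"
  let ?C = "(\<lambda>q. fst q + snd q) ` (A \<times> B)"
  have A: "finite A" and B: "finite B" using assms by (simp_all add: A_def B_def poly_finite_def)
  have restrict: "pmult F G m = (\<Sum>q\<in>{q \<in> A \<times> B. fst q + snd q = m}. F (fst q) * G (snd q))" for m
    unfolding pmult_eq_sum
    by (rule sum.mono_neutral_right[OF finite_add_decompositions]) (auto simp: A_def B_def)
  have supp: "m \<in> ?C" if nz: "pmult F G m \<noteq> 0" for m
  proof -
    obtain e g where "e + g = m" "F e \<noteq> 0" "G g \<noteq> 0" using nz by (rule pmult_nonzero_imp)
    then show ?thesis unfolding A_def B_def by (intro image_eqI[of _ _ "(e, g)"]) simp_all
  qed
  have "peval (pmult F G) p = (\<Sum>m\<in>?C. pmult F G m * mono_eval m p)"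
    using A B supp by (intro peval_eq_sum) auto
  also have "\<dots> = (\<Sum>m\<in>?C. \<Sum>q\<in>{q \<in> A \<times> B. fst q + snd q = m}.
                      F (fst q) * G (snd q) * mono_eval (fst q + snd q) p)"
    by (auto simp: restrict sum_distrib_right intro!: sum.cong)
  also have "\<dots> = (\<Sum>q\<in>A \<times> B. F (fst q) * G (snd q) * mono_eval (fst q + snd q) p)"
    using A B by (intro sum.group) auto
  also have "\<dots> = (\<Sum>a\<in>A. F a * mono_eval a p) * (\<Sum>b\<in>B. G b * mono_eval b p)"
    by (simp add: sum_product sum.cartesian_product mono_eval_add split_def ac_simps)
  also have "\<dots> = peval F p * peval G p"
    using A B by (simp add: peval_eq_sum A_def B_def)
  finally show ?thesis .
qed

lemma homog_pmult:
  assumes E: "homog d E" and G: "\<And>g. G g \<noteq> 0 \<Longrightarrow> mdeg g + d = n"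
  shows "homog n (pmult E G)"
  unfolding homog_def
proof (intro allI impI)
  fix m assume "pmult E G m \<noteq> 0"
  then obtain e g where m: "e + g = m" and "E e \<noteq> 0" "G g \<noteq> 0" by (rule pmult_nonzero_imp)
  then have "e \<in> monomials d" "mdeg g + d = n" using E G by (auto intro: homogD)
  then show "m \<in> monomials n" by (simp add: mem_monomials_iff flip: m)
qed

lemma fst_lt_of_mem_monomials: "e \<in> monomials d \<Longrightarrow> e \<noteq> (d, 0, 0) \<Longrightarrow> fst e < d"
  by (cases e) (auto simp: monomials_def)

text \<open>Multiplication by a form containing the monomial x^d is injective: compare the coefficients
  at x^d times a monomial of G of maximal x-degree.\<close>
lemma pmult_eq_zero_imp:
  fixes E G :: "'a::idom tpoly"
  assumes E: "homog d E" "E (d, 0, 0) \<noteq> 0" and G: "poly_finite G"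
    and EG: "\<And>m. pmult E G m = 0"
  shows "G = (\<lambda>_. 0)"
proof (rule ccontr)
  let ?Z = "{g. G g \<noteq> 0}"
  assume "G \<noteq> (\<lambda>_. 0)"
  then have Z: "finite ?Z" "?Z \<noteq> {}" using G by (auto simp: poly_finite_def)
  define i0 where "i0 = Max (fst ` ?Z)"
  have "i0 \<in> fst ` ?Z" unfolding i0_def using Z by (intro Max_in) auto
  then obtain g0 where g0: "G g0 \<noteq> 0" "fst g0 = i0" by blast
  have max: "fst g \<le> i0" if "G g \<noteq> 0" for g
    unfolding i0_def using Z that by (intro Max_ge) auto
  define m where "m = (d, 0, 0) + g0"
  define p0 where "p0 = ((d, 0 :: nat, 0 :: nat), g0)"
  have others: "E (fst p) * G (snd p) = 0" if p: "fst p + snd p = m" "p \<noteq> p0" for p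
  proof (cases "fst p = (d, 0, 0)")
    case True
    then show ?thesis using p by (auto simp: m_def p0_def prod_eq_iff)
  next
    case False
    show ?thesis
    proof (cases "E (fst p) = 0")
      case False': False
      then have "fst (fst p) < d"
        using E(1) False by (intro fst_lt_of_mem_monomials homogD)
      moreover have "fst (fst p) + fst (snd p) = d + i0" using arg_cong[OF p(1), of fst] g0 by (simp add: m_def)
      ultimately have "G (snd p) = 0" using max by fastforce
      then show ?thesis by simp
    qed simp
  qed
  have "pmult E G m = (\<Sum>p\<in>{p. fst p + snd p = m}. E (fst p) * G (snd p))"
    by (rule pmult_eq_sum)
  also have "\<dots> = (\<Sum>p\<in>{p0}. E (fst p) * G (snd p))"
    using others by (intro sum.mono_neutral_right finite_add_decompositions) (auto simp: p0_def m_def)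
  also have "\<dots> \<noteq> 0" using E(2) g0 by (simp add: p0_def)
  finally show False using EG by simp
qed

lemma pmult_homog_part:
  assumes E: "homog d E" and EG: "homog n (pmult E G)"
  shows "pmult E G = pmult E (\<lambda>g. if mdeg g + d = n then G g else 0)"
    (is "_ = pmult E ?G'")
proof
  fix m
  show "pmult E G m = pmult E ?G' m"
  proof (cases "mdeg m = n")
    case True
    have "E (fst p) * G (snd p) = E (fst p) * ?G' (snd p)" if "fst p + snd p = m" for p
      using that True E by (cases "E (fst p) = 0") (auto dest: homogD simp: mem_monomials_iff)
    then show ?thesis unfolding pmult_eq_sum by (intro sum.cong) auto
  next
    case False
    have "homog n (pmult E ?G')" using E by (rule homog_pmult) (simp split: if_splits)
    moreover have "m \<notin> monomials n" using False by (simp add: mem_monomials_iff)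
    ultimately show ?thesis using EG by (metis homogD)
  qed
qed

lemma inj_on_add_multiple:
  fixes E F :: "'a::field tpoly"
  assumes E: "homog d E" "E (d, 0, 0) \<noteq> 0" and F: "\<not> pdvd E F" and L: "finite L"
  shows "inj_on (\<lambda>(c, G) m. c * F m + pmult E G m) (UNIV \<times> supported_on L)"
proof (rule inj_onI, clarsimp)
  fix c c' :: 'a and G G' :: "'a tpoly"
  assume G: "G \<in> supported_on L" "G' \<in> supported_on L"
    and eq: "(\<lambda>m. c * F m + pmult E G m) = (\<lambda>m. c' * F m + pmult E G' m)"
  have diff: "(c - c') * F m = a * pmult E (\<lambda>g. b * G' g + (- b) * G g) m"
    if "a * b = 1" for a b m
  proof -
    have "a * pmult E (\<lambda>g. b * G' g + (- b) * G g) m = a * b * (pmult E G' m - pmult E G m)"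
      by (simp only: pmult_lincomb) (simp add: algebra_simps)
    also have "\<dots> = (c - c') * F m" using fun_cong[OF eq, of m] that by (simp add: algebra_simps)
    finally show ?thesis by simp
  qed
  have fin: "poly_finite (\<lambda>g. a * G' g + b * G g)" for a b
    using L G by (intro poly_finite_if_supported_on lincomb_in_supported_on)
  show "c = c' \<and> G = G'"
  proof (cases "c = c'")
    case True
    then have "(\<lambda>g. 1 * G' g + (- 1) * G g) = (\<lambda>_. 0)"
      using diff[of 1 1] by (intro pmult_eq_zero_imp[OF E fin]) simp
    with True show ?thesis by (simp add: fun_eq_iff)
  next
    case False
    let ?t = "1 / (c - c')"
    have "F m = pmult E (\<lambda>g. ?t * G' g + (- ?t) * G g) m" for m
      using diff[of "c - c'" ?t m] False by simp
    then have "pdvd E F" unfolding pdvd_def using fin by blast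
    with F show ?thesis by simp
  qed
qed

lemma card_monomials: "2 * card (monomials d) = (d + 1) * (d + 2)"
proof (induction d)
  case 0
  have "monomials 0 = {(0, 0, 0)}" by (auto simp: monomials_def)
  then show ?case by simp
next
  case (Suc d)
  let ?raise_z = "\<lambda>(i, j, k). (i, j, Suc k)"
  let ?no_z = "\<lambda>i. (i, Suc d - i, 0)"
  have "monomials (Suc d) = ?raise_z ` monomials d \<union> ?no_z ` {..Suc d}"
  proof (intro equalityI subsetI)
    fix m assume "m \<in> monomials (Suc d)"
    then show "m \<in> ?raise_z ` monomials d \<union> ?no_z ` {..Suc d}"
      by (cases m; rename_tac k; case_tac k) (auto simp: monomials_def image_iff)
  qed (auto simp: monomials_def)
  moreover have "card (?raise_z ` monomials d) = card (monomials d)"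
    by (rule card_image) (auto simp: inj_on_def)
  moreover have "card (?no_z ` {..Suc d}) = Suc (Suc d)"
    by (subst card_image) (auto simp: inj_on_def)
  moreover have "?raise_z ` monomials d \<inter> ?no_z ` {..Suc d} = {}" by auto
  ultimately have "card (monomials (Suc d)) = card (monomials d) + Suc (Suc d)"
    by (simp add: card_Un_disjoint)
  then show ?case using Suc.IH by simp
qed

lemma finite_cofactor_monomials: "finite {g. mdeg g + d = n}"
  by (rule finite_subset[OF _ finite_monomials[of "n - d"]]) (auto simp: mem_monomials_iff)

text \<open>For n < 3 the cofactor set is empty (not monomials (n - 3), which truncated subtraction
  would give).\<close>
lemma card_monomials_eq_cofactors:
  assumes "1 \<le> n"
  shows "card (monomials n) = card {g. mdeg g + 3 = n} + 3 * n"
proof (cases "3 \<le> n")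
  case True
  then obtain k where k: "n = k + 3" using le_Suc_ex by (metis add.commute)
  then have "{g. mdeg g + 3 = n} = monomials k" by (auto simp: mem_monomials_iff)
  then show ?thesis using card_monomials[of k] card_monomials[of n] k by (simp add: algebra_simps)
next
  case False
  then have "{g. mdeg g + 3 = n} = {}" "n = 1 \<or> n = 2" using assms by auto
  then show ?thesis using card_monomials[of n] by auto
qed

definition vanishing_forms :: "nat \<Rightarrow> ('i \<Rightarrow> 'a \<times> 'a \<times> 'a) \<Rightarrow> 'i set \<Rightarrow> 'a::comm_ring_1 tpoly set" where
  "vanishing_forms n R S = {F \<in> supported_on (monomials n). \<forall>r\<in>S. peval F (R r) = 0}"

definition left_kernel_on :: "nat \<Rightarrow> ('i \<Rightarrow> 'a \<times> 'a \<times> 'a) \<Rightarrow> 'i set \<Rightarrow> ('i \<Rightarrow> 'a::comm_ring_1) set" where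
  "left_kernel_on n R S =
     {v \<in> supported_on S. \<forall>m\<in>monomials n. (\<Sum>r\<in>S. v r * mono_eval m (R r)) = 0}"

lemma finite_vanishing_forms:
  "finite (vanishing_forms n R S :: ('a::{comm_ring_1,finite}) tpoly set)"
  unfolding vanishing_forms_def by (rule finite_subset[OF _ finite_supported_on[OF finite_monomials]]) auto

lemma card_vanishing_forms:
  fixes R :: "'i \<Rightarrow> 'a::{field,finite} \<times> 'a \<times> 'a"
  assumes S: "finite S" "card S = 3 * n" and n: "1 \<le> n"
  shows "card (vanishing_forms n R S)
       = card (left_kernel_on n R S) * CARD('a) ^ card {g. mdeg g + 3 = n}"
proof -
  have "peval F (R r) = (\<Sum>m\<in>monomials n. F m * mono_eval m (R r))"
    if "F \<in> supported_on (monomials n)" for F r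
    using that by (intro peval_eq_sum) (auto simp: supported_on_def)
  then have "vanishing_forms n R S = {F \<in> supported_on (monomials n).
               \<forall>r\<in>S. (\<Sum>m\<in>monomials n. F m * mono_eval m (R r)) = 0}"
    by (auto simp: vanishing_forms_def)
  then have "card (vanishing_forms n R S) * CARD('a) ^ card S
           = card (left_kernel_on n R S) * CARD('a) ^ card (monomials n)"
    using card_kernel_transpose[OF S(1) finite_monomials, where a = "\<lambda>r m. mono_eval m (R r)"]
    by (simp add: left_kernel_on_def)
  then show ?thesis using card_monomials_eq_cofactors[OF n] S(2) by (simp add: power_add)
qed

lemma left_kernel_on_nontrivial:
  fixes E F :: "'a::{field,finite} tpoly" and R :: "'i \<Rightarrow> 'a \<times> 'a \<times> 'a"
  assumes S: "finite S" "card S = 3 * n" and n: "1 \<le> n"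
    and E: "homog 3 E" "E (3, 0, 0) \<noteq> 0" and F: "homog n F" "\<not> pdvd E F"
    and vanish: "\<forall>r\<in>S. peval E (R r) = 0 \<and> peval F (R r) = 0"
  shows "\<exists>v\<in>left_kernel_on n R S. v \<noteq> (\<lambda>_. 0)"
proof -
  let ?q = "CARD('a)" and ?L = "{g. mdeg g + 3 = n}"
  let ?\<Phi> = "\<lambda>(c, G) m. c * F m + pmult E G m"
  have sub: "?\<Phi> ` (UNIV \<times> supported_on ?L) \<subseteq> vanishing_forms n R S"
  proof clarify
    fix c :: 'a and G :: "'a tpoly" assume G: "G \<in> supported_on ?L"
    have EG: "homog n (pmult E G)" using E(1) G by (intro homog_pmult) (auto simp: supported_on_def)
    have "peval (\<lambda>m. c * F m + pmult E G m) p = c * peval F p + peval E p * peval G p" for p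
      using homog_imp_poly_finite[OF F(1)] homog_imp_poly_finite[OF EG] homog_imp_poly_finite[OF E(1)]
        poly_finite_if_supported_on[OF finite_cofactor_monomials G]
      by (simp add: peval_lincomb peval_pmult)
    then have "peval (\<lambda>m. c * F m + pmult E G m) (R r) = 0" if "r \<in> S" for r
      using vanish that by simp
    moreover have "(\<lambda>m. c * F m + 1 * pmult E G m) \<in> supported_on (monomials n)"
      using F(1) EG by (intro lincomb_in_supported_on) (simp_all add: homog_iff_supported_on)
    ultimately show "(\<lambda>m. c * F m + pmult E G m) \<in> vanishing_forms n R S"
      by (simp add: vanishing_forms_def)
  qed
  have inj: "inj_on ?\<Phi> (UNIV \<times> supported_on ?L)"
    by (rule inj_on_add_multiple[OF E F(2) finite_cofactor_monomials])
  have "card ((UNIV :: 'a set) \<times> (supported_on ?L :: 'a tpoly set)) \<le> card (vanishing_forms n R S)"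
    by (rule card_inj_on_le[OF inj sub finite_vanishing_forms])
  then have "?q * ?q ^ card ?L \<le> card (left_kernel_on n R S) * ?q ^ card ?L"
    by (simp add: card_cartesian_product card_supported_on finite_cofactor_monomials
                  card_vanishing_forms[OF S n, where 'a='a])
  then have "2 \<le> card (left_kernel_on n R S)"
    using two_le_CARD_field[where 'a='a] by simp
  then show ?thesis by (rule exists_ne_if_two_le_card)
qed

lemma exists_vanishing_form_not_multiple:
  fixes E :: "'a::{field,finite} tpoly" and R :: "'i \<Rightarrow> 'a \<times> 'a \<times> 'a"
  assumes S: "finite S" "card S = 3 * n" and n: "1 \<le> n" and E: "homog 3 E"
    and v: "v \<in> left_kernel_on n R S" "v \<noteq> (\<lambda>_. 0)"
  shows "\<exists>F. homog n F \<and> \<not> pdvd E F \<and> (\<forall>r\<in>S. peval F (R r) = 0)"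
proof -
  let ?q = "CARD('a)" and ?L = "{g. mdeg g + 3 = n}"
  let ?multiples = "pmult E ` supported_on ?L"
  have "{\<lambda>_. 0, v} \<subseteq> left_kernel_on n R S"
    using v(1) by (auto simp: left_kernel_on_def supported_on_def)
  then have "card {\<lambda>_. 0, v} \<le> card (left_kernel_on n R S)"
    using S(1) by (intro card_mono) (auto simp: left_kernel_on_def)
  then have "2 * ?q ^ card ?L \<le> card (vanishing_forms n R S)"
    using v(2) card_vanishing_forms[OF S n, where 'a='a] by simp
  moreover have "card ?multiples \<le> ?q ^ card ?L"
    using card_image_le[of "supported_on ?L" "pmult E"]
    by (simp add: card_supported_on finite_cofactor_monomials)
  moreover have "0 < ?q ^ card ?L" by simp
  ultimately have "card ?multiples < card (vanishing_forms n R S)" by linarith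
  then have "\<not> vanishing_forms n R S \<subseteq> ?multiples"
    using card_mono[of ?multiples "vanishing_forms n R S"] by (auto simp: finite_cofactor_monomials)
  then obtain F where F: "F \<in> vanishing_forms n R S" "F \<notin> ?multiples" by blast
  then have hom: "homog n F" by (simp add: vanishing_forms_def homog_iff_supported_on)
  have "\<not> pdvd E F"
  proof
    assume "pdvd E F"
    then obtain G where "F = pmult E G" by (auto simp: pdvd_def)
    with E hom have "F = pmult E (\<lambda>g. if mdeg g + 3 = n then G g else 0)"
      using pmult_homog_part by blast
    moreover have "(\<lambda>g. if mdeg g + 3 = n then G g else 0) \<in> supported_on ?L"
      by (simp add: supported_on_def)
    ultimately show False using F(2) by blast
  qed
  with hom F(1) show ?thesis by (auto simp: vanishing_forms_def)
qed

lemma in_left_kernel_iff_left_kernel_on: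
  assumes S: "S \<subseteq> {..<N}" and v: "\<forall>r<N. r \<notin> S \<longrightarrow> v r = 0"
  shows "in_left_kernel n N R v \<longleftrightarrow> (\<lambda>r. if r \<in> S then v r else 0) \<in> left_kernel_on n R S"
proof -
  have "(\<Sum>r<N. v r * mono_eval m (R r)) = (\<Sum>r\<in>S. (if r \<in> S then v r else 0) * mono_eval m (R r))"
    for m using S v by (subst sum.mono_neutral_right[of _ S]) auto
  then show ?thesis by (simp add: in_left_kernel_def left_kernel_on_def supported_on_def)
qed

lemma exists_kernel_vector_supported_on:
  fixes E F :: "'a::{field,finite} tpoly"
  assumes S: "S \<subseteq> {..<N}" "card S = 3 * n" and n: "1 \<le> n"
    and E: "homog 3 E" "E (3, 0, 0) \<noteq> 0" and F: "homog n F" "\<not> pdvd E F"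
    and vanish: "\<forall>r\<in>S. peval E (R r) = 0 \<and> peval F (R r) = 0"
  shows "\<exists>v. in_left_kernel n N R v \<and> (\<exists>r<N. v r \<noteq> 0) \<and> (\<forall>r<N. r \<notin> S \<longrightarrow> v r = 0)"
proof -
  have "finite S" using S(1) finite_subset by blast
  then obtain v where v: "v \<in> left_kernel_on n R S" "v \<noteq> (\<lambda>_. 0)"
    using left_kernel_on_nontrivial[OF _ S(2) n E F vanish] by blast
  then have zero: "v r = 0" if "r \<notin> S" for r using that by (auto simp: left_kernel_on_def supported_on_def)
  then have "(\<lambda>r. if r \<in> S then v r else 0) = v" by auto
  moreover have "in_left_kernel n N R v \<longleftrightarrow> (\<lambda>r. if r \<in> S then v r else 0) \<in> left_kernel_on n R S"
    using zero by (intro in_left_kernel_iff_left_kernel_on[OF S(1)]) auto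
  ultimately have "in_left_kernel n N R v" using v(1) by simp
  moreover obtain r where "v r \<noteq> 0" using v(2) by auto
  then have "r < N" using zero S(1) by blast
  ultimately show ?thesis using zero \<open>v r \<noteq> 0\<close> by blast
qed

lemma exists_vanishing_form_of_kernel_vector:
  fixes E :: "'a::{field,finite} tpoly"
  assumes S: "S \<subseteq> {..<N}" "card S = 3 * n" and n: "1 \<le> n" and E: "homog 3 E"
    and v: "in_left_kernel n N R v" "\<exists>r<N. v r \<noteq> 0" "{r. r < N \<and> v r \<noteq> 0} \<subseteq> S"
  shows "\<exists>F. homog n F \<and> \<not> pdvd E F \<and> (\<forall>r\<in>S. peval F (R r) = 0)"
proof (rule exists_vanishing_form_not_multiple[OF _ S(2) n E])
  show "finite S" using S(1) finite_subset by blast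
  show "(\<lambda>r. if r \<in> S then v r else 0) \<in> left_kernel_on n R S"
    using v(1,3) S(1) by (subst in_left_kernel_iff_left_kernel_on[symmetric]) auto
  show "(\<lambda>r. if r \<in> S then v r else 0) \<noteq> (\<lambda>_. 0)"
    using v(2,3) by (auto simp: fun_eq_iff)
qed

lemma card_zeros_ge:
  assumes "S \<subseteq> {..<N}" and "\<forall>r<N. r \<notin> S \<longrightarrow> v r = 0"
  shows "N - card S \<le> card {r. r < N \<and> v r = 0}"
proof -
  have "card ({..<N} - S) = N - card S"
    using assms(1) by (simp add: card_Diff_subset finite_subset)
  moreover have "{..<N} - S \<subseteq> {r. r < N \<and> v r = 0}" using assms by auto
  ultimately show ?thesis using card_mono[of "{r. r < N \<and> v r = 0}" "{..<N} - S"] by simp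
qed

lemma homog_weier: "homog 3 (weier a1 a2 a3 a4 a6)"
  by (simp add: homog_def weier_def monomials_def)

theorem mainTheorem4:
  fixes a1 a2 a3 a4 a6 :: "'a::{field,finite}"
    and n' l :: nat
    and R :: "nat \<Rightarrow> 'a \<times> 'a \<times> 'a"
  defines "N \<equiv> 3 * n' + l"
  assumes smooth: "weier_disc a1 a2 a3 a4 a6 \<noteq> 0"
    and n'_pos: "n' \<ge> 1" and l_pos: "l \<ge> 1"
    and pts: "\<forall>r<N. proj_point (R r) \<and> peval (weier a1 a2 a3 a4 a6) (R r) = 0"
    and distinct: "\<forall>r<N. \<forall>s<N. r \<noteq> s \<longrightarrow> \<not> proj_eq (R r) (R s)"
  shows
    "((\<exists>F S. homog n' F \<and> \<not> pdvd (weier a1 a2 a3 a4 a6) F \<and>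
             S \<subseteq> {..<N} \<and> card S = 3 * n' \<and> (\<forall>r\<in>S. peval F (R r) = 0))
      \<longrightarrow> (\<exists>v. in_left_kernel n' N R v \<and> (\<exists>r<N. v r \<noteq> 0) \<and>
               card {r. r < N \<and> v r = 0} \<ge> l))
     \<and> (\<forall>F S. homog n' F \<and> \<not> pdvd (weier a1 a2 a3 a4 a6) F \<and>
             S \<subseteq> {..<N} \<and> card S = 3 * n' \<and> (\<forall>r\<in>S. peval F (R r) = 0)
          \<longrightarrow> (\<exists>v. in_left_kernel n' N R v \<and> (\<exists>r<N. v r \<noteq> 0) \<and>
                   (\<forall>r<N. r \<notin> S \<longrightarrow> v r = 0)))
     \<and> (\<forall>v. in_left_kernel n' N R v \<and> (\<exists>r<N. v r \<noteq> 0) \<and>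
             card {r. r < N \<and> v r = 0} \<ge> l
          \<longrightarrow> (\<forall>S. S \<subseteq> {..<N} \<and> card S = 3 * n' \<and> {r. r < N \<and> v r \<noteq> 0} \<subseteq> S
               \<longrightarrow> (\<exists>F. homog n' F \<and> \<not> pdvd (weier a1 a2 a3 a4 a6) F \<and>
                        (\<forall>r\<in>S. peval F (R r) = 0))))"
proof -
  let ?E = "weier a1 a2 a3 a4 a6"
  have E: "homog 3 ?E" "?E (3, 0, 0) \<noteq> 0" by (simp_all add: homog_weier weier_def)
  have kernel_vector: "\<exists>v. in_left_kernel n' N R v \<and> (\<exists>r<N. v r \<noteq> 0) \<and> (\<forall>r<N. r \<notin> S \<longrightarrow> v r = 0)"
    if "homog n' F" "\<not> pdvd ?E F" "S \<subseteq> {..<N}" "card S = 3 * n'" "\<forall>r\<in>S. peval F (R r) = 0"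
    for F S
    using that pts by (intro exists_kernel_vector_supported_on[OF _ _ n'_pos E]) auto
  show ?thesis
  proof (intro conjI allI impI; elim exE conjE)
    fix F S
    assume "homog n' F" "\<not> pdvd ?E F" and S: "S \<subseteq> {..<N}" "card S = 3 * n'"
      and "\<forall>r\<in>S. peval F (R r) = 0"
    then obtain v where "in_left_kernel n' N R v" "\<exists>r<N. v r \<noteq> 0" "\<forall>r<N. r \<notin> S \<longrightarrow> v r = 0"
      using kernel_vector by blast
    moreover from this(3) have "l \<le> card {r. r < N \<and> v r = 0}"
      using card_zeros_ge[OF S(1)] S(2) by (simp add: N_def)
    ultimately show "\<exists>v. in_left_kernel n' N R v \<and> (\<exists>r<N. v r \<noteq> 0) \<and> l \<le> card {r. r < N \<and> v r = 0}"
      by blast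
  qed (use kernel_vector exists_vanishing_form_of_kernel_vector[OF _ _ n'_pos E(1)] in blast)+
qed

end
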